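(* Let $\mathcal{L}$ be classical propositional logic $(\mathrm{Fm},\vdash_{\mathrm{CPL}})$ or intuitionistic propositional logic $(\mathrm{Fm},\vdash_{\mathrm{IPL}})$, and let $N\subseteq\mathrm{Fm}\times\mathrm{Fm}$ be closed under (WO). Let $P_N=\{(\alpha,\varphi)\mid(\alpha,\neg\varphi)\notin N\}$. Then $P_N$ is the largest relation $P\subseteq\mathrm{Fm}\times\mathrm{Fm}$ such that for all $\alpha,\varphi,\psi\in\mathrm{Fm}$: if $(\alpha,\varphi)\in P$ and $(\alpha,\psi)\in N$ then $Cn(\varphi,\psi)\neq\mathrm{Fm}$. (That is, $P_N$ has this property and contains every $P$ having it.)
   Context: $Cn(\Gamma)=\{\psi\mid\Gamma\vdash\psi\}$ for the relevant consequence relation $\vdash$, and $Cn(\varphi,\psi)=Cn(\{\varphi,\psi\})$. A normative system is a relation $N\subseteq\mathrm{Fm}\times\mathrm{Fm}$. $N$ is closed under (WO) if $(\alpha,\varphi)\in N$ and $\varphi\vdash\psi$ imply $(\alpha,\psi)\in N$. *)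

theory Defs
  imports Main
begin

datatype fm =
    Atom nat
  | Bot
  | Top
  | Neg fm
  | Conj fm fm
  | Disj fm fm
  | Imp fm fm

datatype logic = CPL | IPL

inductive derives :: "logic \<Rightarrow> fm set \<Rightarrow> fm \<Rightarrow> bool" where
  Assm:  "\<phi> \<in> \<Gamma> \<Longrightarrow> derives L \<Gamma> \<phi>"
| TopI:  "derives L \<Gamma> Top"
| BotE:  "derives L \<Gamma> Bot \<Longrightarrow> derives L \<Gamma> \<phi>"
| ConjI: "derives L \<Gamma> \<phi> \<Longrightarrow> derives L \<Gamma> \<psi> \<Longrightarrow> derives L \<Gamma> (Conj \<phi> \<psi>)"
| ConjE1: "derives L \<Gamma> (Conj \<phi> \<psi>) \<Longrightarrow> derives L \<Gamma> \<phi>"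
| ConjE2: "derives L \<Gamma> (Conj \<phi> \<psi>) \<Longrightarrow> derives L \<Gamma> \<psi>"
| DisjI1: "derives L \<Gamma> \<phi> \<Longrightarrow> derives L \<Gamma> (Disj \<phi> \<psi>)"
| DisjI2: "derives L \<Gamma> \<psi> \<Longrightarrow> derives L \<Gamma> (Disj \<phi> \<psi>)"
| DisjE: "derives L \<Gamma> (Disj \<phi> \<psi>) \<Longrightarrow> derives L (insert \<phi> \<Gamma>) \<chi> \<Longrightarrow>
          derives L (insert \<psi> \<Gamma>) \<chi> \<Longrightarrow> derives L \<Gamma> \<chi>"
| ImpI:  "derives L (insert \<phi> \<Gamma>) \<psi> \<Longrightarrow> derives L \<Gamma> (Imp \<phi> \<psi>)"
| ImpE:  "derives L \<Gamma> (Imp \<phi> \<psi>) \<Longrightarrow> derives L \<Gamma> \<phi> \<Longrightarrow> derives L \<Gamma> \<psi>"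
| NegI:  "derives L (insert \<phi> \<Gamma>) Bot \<Longrightarrow> derives L \<Gamma> (Neg \<phi>)"
| NegE:  "derives L \<Gamma> (Neg \<phi>) \<Longrightarrow> derives L \<Gamma> \<phi> \<Longrightarrow> derives L \<Gamma> Bot"
| RAA:   "L = CPL \<Longrightarrow> derives L (insert (Neg \<phi>) \<Gamma>) Bot \<Longrightarrow> derives L \<Gamma> \<phi>"

definition Cn :: "logic \<Rightarrow> fm set \<Rightarrow> fm set" where
  "Cn L \<Gamma> = {\<psi>. derives L \<Gamma> \<psi>}"

definition closed_WO :: "logic \<Rightarrow> (fm \<times> fm) set \<Rightarrow> bool" where
  "closed_WO L N \<longleftrightarrow>
     (\<forall>\<alpha> \<phi> \<psi>. (\<alpha>, \<phi>) \<in> N \<longrightarrow> derives L {\<phi>} \<psi> \<longrightarrow> (\<alpha>, \<psi>) \<in> N)"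

definition P_of :: "(fm \<times> fm) set \<Rightarrow> (fm \<times> fm) set" where
  "P_of N = {(\<alpha>, \<phi>). (\<alpha>, Neg \<phi>) \<notin> N}"

end

theory Submission
  imports Defs
begin

text \<open>\<phi> is inconsistent with an obligation \<psi> precisely when \<psi> derives \<not>\<phi>; by (WO)
  that puts (\<alpha>, \<not>\<phi>) into N, so P_N is coherent. Conversely a coherent P cannot contain
  (\<alpha>, \<phi>) with (\<alpha>, \<not>\<phi>) \<in> N, because {\<phi>, \<not>\<phi>} is inconsistent; this direction
  needs no closure property of N.\<close>

definition coherent_with :: "logic \<Rightarrow> (fm \<times> fm) set \<Rightarrow> (fm \<times> fm) set \<Rightarrow> bool" where
  "coherent_with L N P \<longleftrightarrow>
     (\<forall>\<alpha> \<phi> \<psi>. (\<alpha>, \<phi>) \<in> P \<longrightarrow> (\<alpha>, \<psi>) \<in> N \<longrightarrow> Cn L {\<phi>, \<psi>} \<noteq> UNIV)"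

lemma Cn_eq_UNIV_iff: "Cn L \<Gamma> = UNIV \<longleftrightarrow> derives L \<Gamma> Bot"
  unfolding Cn_def by (auto intro: BotE)

lemma derives_Neg_if_Cn_insert_eq_UNIV:
  assumes "Cn L (insert \<phi> \<Gamma>) = UNIV"
  shows "derives L \<Gamma> (Neg \<phi>)"
  using assms by (simp add: Cn_eq_UNIV_iff NegI)

lemma Cn_contradiction_eq_UNIV: "Cn L {\<phi>, Neg \<phi>} = UNIV"
  unfolding Cn_eq_UNIV_iff by (rule NegE[of _ _ \<phi>]) (auto intro: Assm)

lemma coherent_with_P_of:
  assumes "closed_WO L N"
  shows "coherent_with L N (P_of N)"
  unfolding coherent_with_def
proof (intro allI impI notI)
  fix \<alpha> \<phi> \<psi>
  assume permitted: "(\<alpha>, \<phi>) \<in> P_of N" and obliged: "(\<alpha>, \<psi>) \<in> N"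
    and "Cn L {\<phi>, \<psi>} = UNIV"
  then have "derives L {\<psi>} (Neg \<phi>)"
    by (simp add: derives_Neg_if_Cn_insert_eq_UNIV)
  with assms obliged have "(\<alpha>, Neg \<phi>) \<in> N"
    unfolding closed_WO_def by blast
  with permitted show False
    unfolding P_of_def by simp
qed

lemma coherent_with_imp_subset_P_of:
  assumes "coherent_with L N P"
  shows "P \<subseteq> P_of N"
proof
  fix x assume "x \<in> P"
  then obtain \<alpha> \<phi> where x: "x = (\<alpha>, \<phi>)" and "(\<alpha>, \<phi>) \<in> P"
    by (cases x) simp
  with assms have "(\<alpha>, Neg \<phi>) \<notin> N"
    unfolding coherent_with_def using Cn_contradiction_eq_UNIV by blast
  then show "x \<in> P_of N"
    unfolding x P_of_def by simp
qed

theorem proposition2p6: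
  fixes L :: logic and N :: "(fm \<times> fm) set"
  assumes "closed_WO L N"
  shows "(\<forall>\<alpha> \<phi> \<psi>. (\<alpha>, \<phi>) \<in> P_of N \<longrightarrow> (\<alpha>, \<psi>) \<in> N \<longrightarrow> Cn L {\<phi>, \<psi>} \<noteq> UNIV)
       \<and> (\<forall>P :: (fm \<times> fm) set.
            (\<forall>\<alpha> \<phi> \<psi>. (\<alpha>, \<phi>) \<in> P \<longrightarrow> (\<alpha>, \<psi>) \<in> N \<longrightarrow> Cn L {\<phi>, \<psi>} \<noteq> UNIV)
            \<longrightarrow> P \<subseteq> P_of N)"
  using coherent_with_P_of[OF assms] coherent_with_imp_subset_P_of
  unfolding coherent_with_def by blast

end
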